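(* Let $\theta\in\mathbb{R}$, $\chi\in\mathbb{R}\setminus\{0\}$, $\tilde M=\begin{bmatrix}\cos\theta&\chi\sin\theta\\-\chi^{-1}\sin\theta&\cos\theta\end{bmatrix}$, let $n\ge0$ be an integer, $(q_0,p_0)\in\mathbb{R}^2$, $(q_n,p_n)^T=\tilde M^n(q_0,p_0)^T$, $H(q,p)=\frac12(p^2+q^2)$ and $\Delta(q_0,p_0)=H(q_n,p_n)-H(q_0,p_0)$. If $\chi^2\ge1$ then $\Delta(q_0,p_0)\le\frac12(\chi^2-1)p_0^2$; if $\chi^2\le1$ then $\Delta(q_0,p_0)\le\frac12(\chi^{-2}-1)q_0^2$. These bounds are uniform in $n$.
   Context: $\tilde M$ is the one-step matrix of a consistent reversible volume-preserving integrator applied with a stable step size $h$ to the harmonic oscillator $dq/dt=p$, $dp/dt=-q$ (there $\theta=\theta_h$, $\chi=\chi_h$). *)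

theory Defs
  imports "HOL-Analysis.Analysis"
begin

definition Mtilde :: "real \<Rightarrow> real \<Rightarrow> real^2^2" where
  "Mtilde t c = vector [vector [cos t, c * sin t],
                          vector [- (inverse c) * sin t, cos t]]"

definition matpow :: "real^2^2 \<Rightarrow> nat \<Rightarrow> real^2^2" where
  "matpow M n = (((**) M) ^^ n) (mat 1)"

definition H :: "real \<Rightarrow> real \<Rightarrow> real" where
  "H q p = (p^2 + q^2) / 2"

end

theory Submission
  imports Defs
begin

text \<open>
  For \<open>\<chi> \<noteq> 0\<close> the matrices \<open>Mtilde \<theta> \<chi>\<close> form a one-parameter group, so \<open>Mtilde\<^sup>n\<close> is
  \<open>Mtilde (n\<theta>)\<close>; each of them is a rotation in the coordinates \<open>(q, \<chi> p)\<close> and therefore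
  conserves the modified energy \<open>q\<^sup>2 + \<chi>\<^sup>2 p\<^sup>2\<close>. Comparing \<open>H\<close> with this conserved
  quantity from above gives both bounds, independently of \<open>n\<close>.
\<close>

lemma Mtilde_nth [simp]:
  "Mtilde t c $ 1 $ 1 = cos t" "Mtilde t c $ 1 $ 2 = c * sin t"
  "Mtilde t c $ 2 $ 1 = - inverse c * sin t" "Mtilde t c $ 2 $ 2 = cos t"
  by (simp_all add: Mtilde_def)

lemma Mtilde_zero: "Mtilde 0 c = mat 1"
  by (simp add: vec_eq_iff forall_2 mat_def)

lemma Mtilde_add:
  assumes "c \<noteq> 0"
  shows "Mtilde s c ** Mtilde t c = Mtilde (s + t) c"
  using assms
  by (simp add: vec_eq_iff forall_2 matrix_matrix_mult_def sum_2 cos_add sin_add field_simps)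

lemma matpow_Mtilde:
  assumes "c \<noteq> 0"
  shows "matpow (Mtilde t c) n = Mtilde (real n * t) c"
proof (induction n)
  case 0
  show ?case by (simp add: matpow_def Mtilde_zero)
next
  case (Suc n)
  have "matpow (Mtilde t c) (Suc n) = Mtilde t c ** matpow (Mtilde t c) n"
    by (simp add: matpow_def)
  also have "\<dots> = Mtilde (real (Suc n) * t) c"
    using Suc assms by (simp add: Mtilde_add distrib_right add.commute)
  finally show ?case .
qed

lemma Mtilde_preserves_modified_energy:
  fixes t c :: real and v :: "real^2"
  assumes "c \<noteq> 0"
  defines "w \<equiv> Mtilde t c *v v"
  shows "(w $ 1)^2 + c^2 * (w $ 2)^2 = (v $ 1)^2 + c^2 * (v $ 2)^2"
proof -
  have "w $ 1 = cos t * v$1 + c * sin t * v$2" "c * w $ 2 = - sin t * v$1 + c * cos t * v$2"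
    using assms by (simp_all add: matrix_vector_mult_def sum_2 algebra_simps)
  then have "(w $ 1)^2 + c^2 * (w $ 2)^2
      = (cos t * v$1 + c * sin t * v$2)^2 + (- sin t * v$1 + c * cos t * v$2)^2"
    by (metis power_mult_distrib)
  also have "\<dots> = ((sin t)^2 + (cos t)^2) * ((v $ 1)^2 + c^2 * (v $ 2)^2)"
    by algebra
  finally show ?thesis by simp
qed

lemma H_diff_eq: "H x y - H q p = (x^2 + y^2 - q^2 - p^2) / 2"
  by (simp add: H_def field_simps)

lemma H_increase_le_if_ge_one:
  fixes c x y q p :: real
  assumes "x^2 + c^2 * y^2 = q^2 + c^2 * p^2" and "c^2 \<ge> 1"
  shows "H x y - H q p \<le> (c^2 - 1) * p^2 / 2"
proof -
  have "y^2 \<le> c^2 * y^2"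
    using mult_right_mono[OF assms(2), of "y^2"] by simp
  then have "x^2 + y^2 - q^2 - p^2 \<le> (c^2 - 1) * p^2"
    using assms(1) by (simp add: algebra_simps)
  then show ?thesis
    unfolding H_diff_eq by (simp add: divide_right_mono)
qed

lemma H_increase_le_if_le_one:
  fixes c x y q p :: real
  assumes "x^2 + c^2 * y^2 = q^2 + c^2 * p^2" and "c \<noteq> 0" and "c^2 \<le> 1"
  shows "H x y - H q p \<le> (inverse (c^2) - 1) * q^2 / 2"
proof -
  have "c^2 * x^2 \<le> x^2"
    using mult_right_mono[OF assms(3), of "x^2"] by simp
  moreover have "c^2 * ((inverse (c^2) - 1) * q^2) = q^2 - c^2 * q^2"
    using assms(2) by (simp add: algebra_simps)
  moreover have "c^2 * (x^2 + y^2 - q^2 - p^2) = c^2 * x^2 + c^2 * y^2 - c^2 * q^2 - c^2 * p^2"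
    by (simp add: algebra_simps)
  ultimately have "c^2 * (x^2 + y^2 - q^2 - p^2) \<le> c^2 * ((inverse (c^2) - 1) * q^2)"
    using assms(1) by linarith
  then have "x^2 + y^2 - q^2 - p^2 \<le> (inverse (c^2) - 1) * q^2"
    using assms(2) by simp
  then show ?thesis
    unfolding H_diff_eq by (simp add: divide_right_mono)
qed

theorem proposition6p2:
  fixes t c q0 p0 :: real and n :: nat
  assumes "c \<noteq> 0"
  defines "z \<equiv> matpow (Mtilde t c) n *v vector [q0, p0]"
  defines "\<Delta> \<equiv> H (z $ 1) (z $ 2) - H q0 p0"
  shows "(c^2 \<ge> 1 \<longrightarrow> \<Delta> \<le> (c^2 - 1) * p0^2 / 2)
       \<and> (c^2 \<le> 1 \<longrightarrow> \<Delta> \<le> (inverse (c^2) - 1) * q0^2 / 2)"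
proof -
  have "z = Mtilde (real n * t) c *v vector [q0, p0]"
    unfolding z_def using assms(1) by (simp add: matpow_Mtilde)
  then have conserved: "(z $ 1)^2 + c^2 * (z $ 2)^2 = q0^2 + c^2 * p0^2"
    using Mtilde_preserves_modified_energy[OF assms(1)] by simp
  show ?thesis
    unfolding \<Delta>_def
    using H_increase_le_if_ge_one[OF conserved] H_increase_le_if_le_one[OF conserved assms(1)]
    by blast
qed

end
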